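(* Let $G$ be a simple undirected graph on $\{1,\dots,n\}$ with adjacency $g_{ij}$ and degrees $d_i$, and let the exposure of unit $i$ be $e_i=\sum_j g_{ij}z_j\in\{0,1,\dots,d_i\}$. Suppose the potential outcomes are $Y_i(z_i,e_i)=\alpha_i+\beta_iz_i+B_i(e_i)$ with $B_i(0)=0$. Under a completely randomized design with $1\le n_t\le n-1$ treated units, and under a restricted Bernoulli design with $0<p<1$, the bias of $$\hat\beta_{naive}=\frac{\sum_i Y_i^{obs}Z_i}{\sum_i Z_i}-\frac{\sum_i Y_i^{obs}(1-Z_i)}{\sum_i(1-Z_i)}$$ for $\mathrm{DTE}=\frac1n\sum_i(Y_i(1,0)-Y_i(0,0))$ is $$\mathbb E[\hat\beta_{naive}]-\mathrm{DTE}=\sum_i\sum_{e\ne0}B_i(e)\big[\alpha_i(1,e)-\alpha_i(0,e)\big],$$ where $\alpha_i(z,e)=\mathbb E\!\left[\frac{I(Z_i=z,E_i=e)}{\sum_jI(Z_j=z)}\right]$.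
   Context: Completely randomized design: $\mathbf Z$ is uniform over vectors in $\{0,1\}^n$ with exactly $n_t$ ones. Restricted Bernoulli design with parameter $p$: $P(\mathbf Z=\mathbf z)=p^{|\mathbf z|}(1-p)^{n-|\mathbf z|}/(1-p^n-(1-p)^n)$ for $0<|\mathbf z|<n$ and $0$ otherwise, where $|\mathbf z|=\sum_i z_i$. $E_i=\sum_j g_{ij}Z_j$ and $Y_i^{obs}=Y_i(Z_i,E_i)$. *)

theory Defs
  imports Complex_Main
begin

text \<open>Units are indexed by 0,...,n-1. An assignment is represented by the set S of
treated units (S a subset of {..<n}), so Z_i = 1 iff i is in S.
A design is a probability weight function on assignments; expectations are finite sums
over all subsets of {..<n}.\<close>

definition Zind :: "nat set \<Rightarrow> nat \<Rightarrow> real" where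
  "Zind S i = (if i \<in> S then 1 else 0)"

definition crd_prob :: "nat \<Rightarrow> nat \<Rightarrow> nat set \<Rightarrow> real" where
  "crd_prob n nt S = (if S \<subseteq> {..<n} \<and> card S = nt then 1 / real (n choose nt) else 0)"

definition rbd_prob :: "nat \<Rightarrow> real \<Rightarrow> nat set \<Rightarrow> real" where
  "rbd_prob n p S = (if S \<subseteq> {..<n} \<and> 0 < card S \<and> card S < n
      then p ^ card S * (1 - p) ^ (n - card S) / (1 - p ^ n - (1 - p) ^ n) else 0)"

definition expect :: "nat \<Rightarrow> (nat set \<Rightarrow> real) \<Rightarrow> (nat set \<Rightarrow> real) \<Rightarrow> real" where
  "expect n P f = (\<Sum>S\<in>Pow {..<n}. P S * f S)"

definition degree :: "(nat \<Rightarrow> nat \<Rightarrow> bool) \<Rightarrow> nat \<Rightarrow> nat \<Rightarrow> nat" where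
  "degree g n i = card {j\<in>{..<n}. g i j}"

definition exposure :: "(nat \<Rightarrow> nat \<Rightarrow> bool) \<Rightarrow> nat \<Rightarrow> nat set \<Rightarrow> nat \<Rightarrow> nat" where
  "exposure g n S i = card {j\<in>{..<n}. g i j \<and> j \<in> S}"

definition Ypot :: "(nat \<Rightarrow> real) \<Rightarrow> (nat \<Rightarrow> real) \<Rightarrow> (nat \<Rightarrow> nat \<Rightarrow> real)
    \<Rightarrow> nat \<Rightarrow> real \<Rightarrow> nat \<Rightarrow> real" where
  "Ypot a b B i z e = a i + b i * z + B i e"

definition Yobs :: "nat \<Rightarrow> (nat \<Rightarrow> nat \<Rightarrow> bool) \<Rightarrow> (nat \<Rightarrow> real) \<Rightarrow> (nat \<Rightarrow> real)
    \<Rightarrow> (nat \<Rightarrow> nat \<Rightarrow> real) \<Rightarrow> nat set \<Rightarrow> nat \<Rightarrow> real" where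
  "Yobs n g a b B S i = Ypot a b B i (Zind S i) (exposure g n S i)"

definition beta_naive :: "nat \<Rightarrow> (nat \<Rightarrow> nat \<Rightarrow> bool) \<Rightarrow> (nat \<Rightarrow> real) \<Rightarrow> (nat \<Rightarrow> real)
    \<Rightarrow> (nat \<Rightarrow> nat \<Rightarrow> real) \<Rightarrow> nat set \<Rightarrow> real" where
  "beta_naive n g a b B S =
     (\<Sum>i<n. Yobs n g a b B S i * Zind S i) / (\<Sum>i<n. Zind S i)
   - (\<Sum>i<n. Yobs n g a b B S i * (1 - Zind S i)) / (\<Sum>i<n. (1 - Zind S i))"

definition DTE :: "nat \<Rightarrow> (nat \<Rightarrow> real) \<Rightarrow> (nat \<Rightarrow> real) \<Rightarrow> (nat \<Rightarrow> nat \<Rightarrow> real) \<Rightarrow> real" where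
  "DTE n a b B = (1 / real n) * (\<Sum>i<n. Ypot a b B i 1 0 - Ypot a b B i 0 0)"

definition alpha_w :: "nat \<Rightarrow> (nat \<Rightarrow> nat \<Rightarrow> bool) \<Rightarrow> (nat set \<Rightarrow> real)
    \<Rightarrow> nat \<Rightarrow> real \<Rightarrow> nat \<Rightarrow> real" where
  "alpha_w n g P i z e = expect n P (\<lambda>S.
      (if Zind S i = z \<and> exposure g n S i = e then 1 else 0)
      / (\<Sum>j<n. if Zind S j = z then 1 else 0))"

definition bias_formula :: "nat \<Rightarrow> (nat \<Rightarrow> nat \<Rightarrow> bool) \<Rightarrow> (nat set \<Rightarrow> real)
    \<Rightarrow> (nat \<Rightarrow> nat \<Rightarrow> real) \<Rightarrow> real" where
  "bias_formula n g P B = (\<Sum>i<n. \<Sum>e\<in>{1..degree g n i}.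
      B i e * (alpha_w n g P i 1 e - alpha_w n g P i 0 e))"

end

theory Submission
  imports Defs "HOL-Combinatorics.Permutations"
begin

text \<open>Write \<open>N\<^sub>t = |S|\<close> and \<open>N\<^sub>c = n - N\<^sub>t\<close>. The naive estimator is the sum of the observed
outcomes weighted by \<open>w\<^sub>i = Z\<^sub>i / N\<^sub>t - (1 - Z\<^sub>i) / N\<^sub>c\<close>, so by linearity its expectation splits
unit by unit into an \<open>\<alpha>\<^sub>i\<close>-, a \<open>\<beta>\<^sub>i\<close>- and an interference part. Both designs are invariant
under permutations of the units, hence \<open>E[Z\<^sub>i / N\<^sub>t]\<close> and \<open>E[(1 - Z\<^sub>i) / N\<^sub>c]\<close> do not depend
on \<open>i\<close>; as each of these quantities sums to \<open>1\<close> over the units, both equal \<open>1/n\<close>. So the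
\<open>\<alpha>\<^sub>i\<close>-parts cancel, the \<open>\<beta>\<^sub>i\<close>-parts add up to the DTE, and expanding
\<open>B\<^sub>i(E\<^sub>i) = \<Sum>\<^sub>e\<^sub>\<noteq>\<^sub>0 B\<^sub>i(e) I(E\<^sub>i = e)\<close> turns the interference part into the bias formula.\<close>

lemma expect_cong:
  "(\<And>S. S \<subseteq> {..<n} \<Longrightarrow> f S = h S) \<Longrightarrow> expect n P f = expect n P h"
  unfolding expect_def by (rule sum.cong) auto

lemma expect_add: "expect n P (\<lambda>S. f S + h S) = expect n P f + expect n P h"
  unfolding expect_def by (simp add: distrib_left sum.distrib)

lemma expect_diff: "expect n P (\<lambda>S. f S - h S) = expect n P f - expect n P h"
  unfolding expect_def by (simp add: right_diff_distrib sum_subtractf)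

lemma expect_mult_left: "expect n P (\<lambda>S. c * f S) = c * expect n P f"
  unfolding expect_def by (simp add: sum_distrib_left mult_ac)

lemma expect_sum: "expect n P (\<lambda>S. \<Sum>i\<in>I. f i S) = (\<Sum>i\<in>I. expect n P (f i))"
  unfolding expect_def sum_distrib_left by (rule sum.swap)

lemma sum_Zind: "S \<subseteq> {..<n} \<Longrightarrow> (\<Sum>j<n. Zind S j) = real (card S)"
  by (simp add: Zind_def sum.If_cases Int_absorb1)

lemma count_treated:
  "S \<subseteq> {..<n} \<Longrightarrow> (\<Sum>j<n. if Zind S j = 1 then 1 else 0) = real (card S)"
  unfolding sum_Zind[symmetric] by (intro sum.cong) (auto simp: Zind_def)

lemma count_controls:
  assumes "S \<subseteq> {..<n}"
  shows "(\<Sum>j<n. if Zind S j = 0 then 1 else 0) = real n - real (card S)"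
proof -
  have "(\<Sum>j<n. if Zind S j = 0 then 1 else 0) = (\<Sum>j<n. 1 - Zind S j)"
    by (intro sum.cong) (auto simp: Zind_def)
  then show ?thesis using assms by (simp add: sum_subtractf sum_Zind)
qed

lemma Zind_permutes: "\<pi> permutes A \<Longrightarrow> Zind (\<pi> ` S) (\<pi> i) = Zind S i"
  by (simp add: Zind_def permutes_inj inj_image_mem_iff)

definition naive_weight :: "nat \<Rightarrow> nat set \<Rightarrow> nat \<Rightarrow> real" where
  "naive_weight n S i = Zind S i / real (card S) - (1 - Zind S i) / (real n - real (card S))"

lemma beta_naive_weighted_sum:
  "S \<subseteq> {..<n} \<Longrightarrow> beta_naive n g a b B S = (\<Sum>i<n. Yobs n g a b B S i * naive_weight n S i)"
  by (simp add: beta_naive_def naive_weight_def sum_Zind sum_subtractf sum_divide_distrib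
      right_diff_distrib diff_divide_distrib)

lemma Yobs_mult_naive_weight:
  "Yobs n g a b B S i * naive_weight n S i
     = a i * naive_weight n S i + b i * (Zind S i / real (card S))
       + B i (exposure g n S i) * naive_weight n S i"
  by (simp add: Yobs_def Ypot_def naive_weight_def Zind_def algebra_simps)

lemma exposure_le_degree: "exposure g n S i \<le> degree g n i"
  unfolding exposure_def degree_def by (rule card_mono) auto

lemma exposure_effect_expansion:
  fixes B :: "nat \<Rightarrow> nat \<Rightarrow> real"
  assumes "B i 0 = 0"
  shows "B i (exposure g n S i)
           = (\<Sum>e\<in>{1..degree g n i}. B i e * (if exposure g n S i = e then 1 else 0))"
proof -
  have "(\<Sum>e\<in>{1..degree g n i}. B i e * (if exposure g n S i = e then 1 else 0))
          = (\<Sum>e\<in>{1..degree g n i}. if exposure g n S i = e then B i e else 0)"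
    by (intro sum.cong) auto
  also have "\<dots> = B i (exposure g n S i)"
    using assms exposure_le_degree[of g n S i] by (cases "exposure g n S i = 0") auto
  finally show ?thesis ..
qed

lemma alpha_w_diff:
  "alpha_w n g P i 1 e - alpha_w n g P i 0 e
     = expect n P (\<lambda>S. (if exposure g n S i = e then 1 else 0) * naive_weight n S i)"
  unfolding alpha_w_def expect_diff[symmetric]
  by (intro expect_cong, simp only: count_treated count_controls)
    (auto simp: naive_weight_def Zind_def)

lemma expect_exposure_effect:
  fixes B :: "nat \<Rightarrow> nat \<Rightarrow> real"
  assumes "B i 0 = 0"
  shows "expect n P (\<lambda>S. B i (exposure g n S i) * naive_weight n S i)
           = (\<Sum>e\<in>{1..degree g n i}. B i e * (alpha_w n g P i 1 e - alpha_w n g P i 0 e))"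
  unfolding alpha_w_diff expect_mult_left[symmetric] expect_sum[symmetric]
  by (intro expect_cong)
    (simp add: exposure_effect_expansion[of B i, OF assms] sum_distrib_right mult.assoc)

locale exchangeable_design =
  fixes n :: nat and P :: "nat set \<Rightarrow> real"
  assumes permutation_invariant: "\<And>\<pi> S. \<pi> permutes {..<n} \<Longrightarrow> S \<subseteq> {..<n} \<Longrightarrow> P (\<pi> ` S) = P S"
    and total_weight: "sum P (Pow {..<n}) = 1"
    and treats_and_controls: "\<And>S. S \<subseteq> {..<n} \<Longrightarrow> P S \<noteq> 0 \<Longrightarrow> 0 < card S \<and> card S < n"
begin

lemma expect_unit_invariant:
  assumes "i < n" "j < n"
  shows "expect n P (\<lambda>S. f (Zind S i) (card S)) = expect n P (\<lambda>S. f (Zind S j) (card S))"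
proof -
  let ?\<pi> = "Transposition.transpose i j"
  have \<pi>: "?\<pi> permutes {..<n}"
    using assms by (intro permutes_swap_id) auto
  have "expect n P (\<lambda>S. f (Zind S i) (card S))
          = (\<Sum>S\<in>Pow {..<n}. P (?\<pi> ` S) * f (Zind (?\<pi> ` S) i) (card (?\<pi> ` S)))"
    unfolding expect_def
    using bij_betw_Pow[OF permutes_imp_bij[OF \<pi>]] by (rule sum.reindex_bij_betw[symmetric])
  also have "\<dots> = expect n P (\<lambda>S. f (Zind S j) (card S))"
    unfolding expect_def
  proof (intro sum.cong refl)
    fix S assume "S \<in> Pow {..<n}"
    moreover have "Zind (?\<pi> ` S) i = Zind S j"
      using Zind_permutes[OF \<pi>, of S j] by simp
    ultimately show "P (?\<pi> ` S) * f (Zind (?\<pi> ` S) i) (card (?\<pi> ` S))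
                       = P S * f (Zind S j) (card S)"
      using \<pi> by (simp add: permutation_invariant card_image permutes_inj_on)
  qed
  finally show ?thesis .
qed

lemma expect_unit_share:
  assumes shares: "\<And>S. S \<subseteq> {..<n} \<Longrightarrow> 0 < card S \<Longrightarrow> card S < n
                      \<Longrightarrow> (\<Sum>j<n. f (Zind S j) (card S)) = 1"
    and "i < n"
  shows "expect n P (\<lambda>S. f (Zind S i) (card S)) = 1 / real n"
proof -
  have "real n * expect n P (\<lambda>S. f (Zind S i) (card S))
          = (\<Sum>j<n. expect n P (\<lambda>S. f (Zind S i) (card S)))"
    by simp
  also have "\<dots> = (\<Sum>j<n. expect n P (\<lambda>S. f (Zind S j) (card S)))"
    by (intro sum.cong refl expect_unit_invariant[OF \<open>i < n\<close>]) simp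
  also have "\<dots> = expect n P (\<lambda>S. \<Sum>j<n. f (Zind S j) (card S))"
    by (rule expect_sum[symmetric])
  also have "\<dots> = sum P (Pow {..<n})"
    unfolding expect_def
  proof (intro sum.cong refl)
    fix S assume "S \<in> Pow {..<n}"
    then show "P S * (\<Sum>j<n. f (Zind S j) (card S)) = P S"
      using shares treats_and_controls by (cases "P S = 0") auto
  qed
  finally have "real n * expect n P (\<lambda>S. f (Zind S i) (card S)) = 1"
    using total_weight by simp
  then show ?thesis
    by (metis mult_zero_left nonzero_eq_divide_eq mult.commute zero_neq_one)
qed

lemma expect_treated_share: "i < n \<Longrightarrow> expect n P (\<lambda>S. Zind S i / real (card S)) = 1 / real n"
proof (rule expect_unit_share[where f = "\<lambda>z c. z / real c"])
  fix S assume "S \<subseteq> {..<n}" "0 < card S"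
  then show "(\<Sum>j<n. Zind S j / real (card S)) = 1"
    unfolding sum_divide_distrib[symmetric] by (simp add: sum_Zind)
qed

lemma expect_control_share:
  "i < n \<Longrightarrow> expect n P (\<lambda>S. (1 - Zind S i) / (real n - real (card S))) = 1 / real n"
proof (rule expect_unit_share[where f = "\<lambda>z c. (1 - z) / (real n - real c)"])
  fix S assume "S \<subseteq> {..<n}" "card S < n"
  then show "(\<Sum>j<n. (1 - Zind S j) / (real n - real (card S))) = 1"
    unfolding sum_divide_distrib[symmetric] by (simp add: sum_subtractf sum_Zind)
qed

lemma expect_naive_weight: "i < n \<Longrightarrow> expect n P (\<lambda>S. naive_weight n S i) = 0"
  unfolding naive_weight_def expect_diff by (simp add: expect_treated_share expect_control_share)

theorem expect_beta_naive_bias: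
  fixes B :: "nat \<Rightarrow> nat \<Rightarrow> real"
  assumes "\<And>i. i < n \<Longrightarrow> B i 0 = 0"
  shows "expect n P (beta_naive n g a b B) - DTE n a b B = bias_formula n g P B"
proof -
  have "expect n P (beta_naive n g a b B)
          = expect n P (\<lambda>S. \<Sum>i<n. a i * naive_weight n S i + b i * (Zind S i / real (card S))
                                   + B i (exposure g n S i) * naive_weight n S i)"
    by (intro expect_cong) (simp add: beta_naive_weighted_sum Yobs_mult_naive_weight)
  also have "\<dots> = (\<Sum>i<n. a i * expect n P (\<lambda>S. naive_weight n S i)
                        + b i * expect n P (\<lambda>S. Zind S i / real (card S))
                        + expect n P (\<lambda>S. B i (exposure g n S i) * naive_weight n S i))"
    by (simp only: expect_sum expect_add expect_mult_left)
  also have "\<dots> = (\<Sum>i<n. b i / real n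
                        + (\<Sum>e\<in>{1..degree g n i}. B i e * (alpha_w n g P i 1 e - alpha_w n g P i 0 e)))"
    using assms by (intro sum.cong refl)
      (simp add: expect_naive_weight expect_treated_share expect_exposure_effect)
  also have "\<dots> = DTE n a b B + bias_formula n g P B"
    by (simp add: DTE_def Ypot_def bias_formula_def sum.distrib sum_divide_distrib)
  finally show ?thesis
    by simp
qed

end

lemma permutes_image_subset_card:
  assumes "\<pi> permutes A" "S \<subseteq> A"
  shows "\<pi> ` S \<subseteq> A" "card (\<pi> ` S) = card S"
  using assms image_mono[OF assms(2), of \<pi>]
  by (simp_all add: permutes_image card_image permutes_inj_on)

lemma exchangeable_design_crd:
  assumes "0 < nt" "nt < n"
  shows "exchangeable_design n (crd_prob n nt)"
proof
  show "crd_prob n nt (\<pi> ` S) = crd_prob n nt S" if "\<pi> permutes {..<n}" "S \<subseteq> {..<n}" for \<pi> S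
    using that by (simp add: crd_prob_def permutes_image_subset_card)
  show "S \<subseteq> {..<n} \<Longrightarrow> crd_prob n nt S \<noteq> 0 \<Longrightarrow> 0 < card S \<and> card S < n" for S
    using assms by (auto simp: crd_prob_def split: if_splits)
  have "sum (crd_prob n nt) (Pow {..<n})
          = (\<Sum>S\<in>Pow {..<n}. if card S = nt then 1 / real (n choose nt) else 0)"
    by (intro sum.cong refl) (auto simp: crd_prob_def)
  also have "\<dots> = (\<Sum>S\<in>{S \<in> Pow {..<n}. card S = nt}. 1 / real (n choose nt))"
    by (rule sum.inter_filter[symmetric]) simp
  also have "\<dots> = 1"
    using assms by (simp add: n_subsets)
  finally show "sum (crd_prob n nt) (Pow {..<n}) = 1" .
qed

lemma sum_binomial_weights:
  fixes p :: "'a :: comm_ring_1"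
  assumes "finite A"
  shows "(\<Sum>S\<in>Pow A. p ^ card S * (1 - p) ^ (card A - card S)) = 1"
proof -
  have "(\<Sum>S\<in>Pow A. p ^ card S * (1 - p) ^ (card A - card S))
          = (\<Sum>S\<in>Pow A. (\<Prod>_\<in>S. p) * (\<Prod>_\<in>A - S. 1 - p))"
    using assms by (intro sum.cong refl) (auto simp: card_Diff_subset finite_subset)
  also have "\<dots> = (\<Prod>_\<in>A. p + (1 - p))"
    using assms by (rule prod_add[symmetric])
  finally show ?thesis
    by simp
qed

lemma nontrivial_subsets_eq:
  assumes "finite A"
  shows "{S \<in> Pow A. 0 < card S \<and> card S < card A} = Pow A - {{}, A}"
proof
  show "{S \<in> Pow A. 0 < card S \<and> card S < card A} \<subseteq> Pow A - {{}, A}"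
    by auto
  show "Pow A - {{}, A} \<subseteq> {S \<in> Pow A. 0 < card S \<and> card S < card A}"
  proof
    fix S assume "S \<in> Pow A - {{}, A}"
    then have "S \<subset> A" "S \<noteq> {}"
      by auto
    moreover have "finite S"
      using \<open>S \<subset> A\<close> assms by (auto intro: finite_subset)
    ultimately show "S \<in> {S \<in> Pow A. 0 < card S \<and> card S < card A}"
      using assms by (auto simp: card_gt_0_iff psubset_card_mono)
  qed
qed

lemma exchangeable_design_rbd:
  assumes "0 < p" "p < 1" "2 \<le> n"
  shows "exchangeable_design n (rbd_prob n p)"
proof
  show "rbd_prob n p (\<pi> ` S) = rbd_prob n p S" if "\<pi> permutes {..<n}" "S \<subseteq> {..<n}" for \<pi> S
    using that by (simp add: rbd_prob_def permutes_image_subset_card)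
  show "S \<subseteq> {..<n} \<Longrightarrow> rbd_prob n p S \<noteq> 0 \<Longrightarrow> 0 < card S \<and> card S < n" for S
    by (auto simp: rbd_prob_def split: if_splits)
  define f where "f S = p ^ card S * (1 - p) ^ (n - card S)" for S :: "nat set"
  define D where "D = 1 - p ^ n - (1 - p) ^ n"
  have "p ^ n < p ^ 1" "(1 - p) ^ n < (1 - p) ^ 1"
    using assms by (intro power_strict_decreasing; simp)+
  then have "D \<noteq> 0"
    unfolding D_def by simp
  have "{} \<noteq> {..<n}"
    using assms lessThan_empty_iff[of n] by auto
  have "sum (rbd_prob n p) (Pow {..<n})
          = (\<Sum>S\<in>Pow {..<n}. if 0 < card S \<and> card S < n then f S / D else 0)"
    by (intro sum.cong refl) (auto simp: rbd_prob_def f_def D_def)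
  also have "\<dots> = (\<Sum>S\<in>{S \<in> Pow {..<n}. 0 < card S \<and> card S < card {..<n}}. f S / D)"
    by (subst sum.inter_filter) simp_all
  also have "\<dots> = sum f (Pow {..<n} - {{}, {..<n}}) / D"
    unfolding nontrivial_subsets_eq[OF finite_lessThan] by (rule sum_divide_distrib[symmetric])
  also have "\<dots> = (sum f (Pow {..<n}) - f {} - f {..<n}) / D"
    using \<open>{} \<noteq> {..<n}\<close> by (simp add: sum_diff)
  also have "\<dots> = 1"
    using sum_binomial_weights[of "{..<n}" p] \<open>D \<noteq> 0\<close> by (simp add: f_def D_def)
  finally show "sum (rbd_prob n p) (Pow {..<n}) = 1" .
qed

theorem corollary1:
  fixes n nt :: nat and p :: real
    and g :: "nat \<Rightarrow> nat \<Rightarrow> bool"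
    and a b :: "nat \<Rightarrow> real" and B :: "nat \<Rightarrow> nat \<Rightarrow> real"
  assumes sym: "\<And>i j. i < n \<Longrightarrow> j < n \<Longrightarrow> g i j = g j i"
    and irrefl: "\<And>i. i < n \<Longrightarrow> \<not> g i i"
    and B0: "\<And>i. i < n \<Longrightarrow> B i 0 = 0"
    and n2: "2 \<le> n"
    and nt: "1 \<le> nt" "nt \<le> n - 1"
    and p: "0 < p" "p < 1"
  shows "expect n (crd_prob n nt) (beta_naive n g a b B) - DTE n a b B
           = bias_formula n g (crd_prob n nt) B
       \<and> expect n (rbd_prob n p) (beta_naive n g a b B) - DTE n a b B
           = bias_formula n g (rbd_prob n p) B"
proof -
  interpret crd: exchangeable_design n "crd_prob n nt"
    using nt n2 by (intro exchangeable_design_crd) auto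
  interpret rbd: exchangeable_design n "rbd_prob n p"
    using p n2 by (rule exchangeable_design_rbd)
  show ?thesis
    using crd.expect_beta_naive_bias[where B = B, OF B0]
      rbd.expect_beta_naive_bias[where B = B, OF B0]
    by blast
qed

end
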